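(* Let $\mathcal{H}$ be a Hilbert space, $\{\mathcal{H}_i : i\in I\}$ a sequence of Hilbert spaces ($I\subseteq\mathbb{Z}$), and let $\Lambda=\{\Lambda_i\in\mathcal{L}(\mathcal{H},\mathcal{H}_i): i\in I\}$ be a $g$-frame for $\mathcal{H}$ with $g$-frame operator $S_\Lambda f=\sum_{i\in I}\Lambda_i^*\Lambda_i f$. Let $C,C'\in\mathcal{GL}^+(\mathcal{H})$ be such that $C$ and $C'$ commute with each other and each commutes with $S_\Lambda$. Then $\Lambda$ is a $(C,C')$-controlled $g$-frame for $\mathcal{H}$.
   Context: $\mathcal{L}(\mathcal{H},\mathcal{K})$ denotes the bounded linear operators from $\mathcal{H}$ to $\mathcal{K}$. $\mathcal{GL}^+(\mathcal{H})$ denotes the set of positive bounded operators on $\mathcal{H}$ (i.e. $\langle Tf,f\rangle>0$ for $f\neq 0$) having a bounded inverse. A family $\Lambda=\{\Lambda_i\in\mathcal{L}(\mathcal{H},\mathcal{H}_i)\}_{i\in I}$ is a $g$-frame for $\mathcal{H}$ if there are constants $0<A\le B<\infty$ with $A\|f\|^2\le\sum_{i\in I}\|\Lambda_i f\|^2\le B\|f\|^2$ for all $f\in\mathcal{H}$; it is a $g$-Bessel sequence if the upper inequality holds. For $C,C'\in\mathcal{GL}^+(\mathcal{H})$, $\Lambda$ is a $(C,C')$-controlled $g$-frame if $\Lambda$ is a $g$-Bessel sequence and there exist constants $A>0$, $B<\infty$ such that $A\|f\|^2\le\sum_{i\in I}\langle\Lambda_i Cf,\Lambda_i C'f\rangle\le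 B\|f\|^2$ for all $f\in\mathcal{H}$. *)

theory Defs
  imports "HOL-Analysis.Analysis"
begin

text \<open>HOL-Analysis only provides real inner product spaces; the paper works with
(complex) Hilbert spaces, so we introduce complex scalar multiplication and a
complex inner product (linear in the first argument, conjugate-linear in the second).\<close>

class complex_vector = real_vector +
  fixes scaleC :: "complex \<Rightarrow> 'a \<Rightarrow> 'a" (infixr "*\<^sub>C" 75)
  assumes scaleC_add_right: "a *\<^sub>C (x + y) = a *\<^sub>C x + a *\<^sub>C y"
    and scaleC_add_left: "(a + b) *\<^sub>C x = a *\<^sub>C x + b *\<^sub>C x"
    and scaleC_scaleC: "a *\<^sub>C (b *\<^sub>C x) = (a * b) *\<^sub>C x"
    and scaleC_one: "1 *\<^sub>C x = x"
    and scaleR_scaleC: "scaleR r x = complex_of_real r *\<^sub>C x"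

class complex_inner = complex_vector + real_normed_vector +
  fixes cinner :: "'a \<Rightarrow> 'a \<Rightarrow> complex"
  assumes cinner_commute: "cinner x y = cnj (cinner y x)"
    and cinner_add_left: "cinner (x + y) z = cinner x z + cinner y z"
    and cinner_scaleC_left: "cinner (a *\<^sub>C x) y = a * cinner x y"
    and cinner_ge_zero: "0 \<le> Re (cinner x x)"
    and cinner_eq_zero_iff: "cinner x x = 0 \<longleftrightarrow> x = 0"
    and norm_eq_sqrt_cinner: "norm x = sqrt (Re (cinner x x))"

definition bounded_clinear :: "('a::complex_inner \<Rightarrow> 'b::complex_inner) \<Rightarrow> bool" where
  "bounded_clinear T \<longleftrightarrow>
     (\<forall>x y. T (x + y) = T x + T y) \<and> (\<forall>a x. T (a *\<^sub>C x) = a *\<^sub>C T x) \<and>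
     (\<exists>K. \<forall>x. norm (T x) \<le> norm x * K)"

definition cadjoint :: "('a::complex_inner \<Rightarrow> 'b::complex_inner) \<Rightarrow> 'b \<Rightarrow> 'a" where
  "cadjoint T = (THE T'. \<forall>x y. cinner (T x) y = cinner x (T' y))"

definition GLplus :: "('a::complex_inner \<Rightarrow> 'a) \<Rightarrow> bool" where
  "GLplus T \<longleftrightarrow> bounded_clinear T \<and>
     (\<forall>f. f \<noteq> 0 \<longrightarrow> Im (cinner (T f) f) = 0 \<and> Re (cinner (T f) f) > 0) \<and>
     (\<exists>D. bounded_clinear D \<and> (\<forall>f. D (T f) = f) \<and> (\<forall>f. T (D f) = f))"

text \<open>g-Bessel sequences and g-frames, indexed by I \<subseteq> \<int>.  All H_i are realised
inside one common Hilbert space 'b.\<close>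
definition g_Bessel :: "int set \<Rightarrow> (int \<Rightarrow> 'a::complex_inner \<Rightarrow> 'b::complex_inner) \<Rightarrow> bool" where
  "g_Bessel I \<Lambda> \<longleftrightarrow> (\<forall>i\<in>I. bounded_clinear (\<Lambda> i)) \<and>
     (\<exists>B. \<forall>f. (\<lambda>i. (norm (\<Lambda> i f))\<^sup>2) summable_on I \<and>
              (\<Sum>\<^sub>\<infinity>i\<in>I. (norm (\<Lambda> i f))\<^sup>2) \<le> B * (norm f)\<^sup>2)"

definition g_frame :: "int set \<Rightarrow> (int \<Rightarrow> 'a::complex_inner \<Rightarrow> 'b::complex_inner) \<Rightarrow> bool" where
  "g_frame I \<Lambda> \<longleftrightarrow> (\<forall>i\<in>I. bounded_clinear (\<Lambda> i)) \<and>
     (\<exists>A B. 0 < A \<and> A \<le> B \<and>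
        (\<forall>f. (\<lambda>i. (norm (\<Lambda> i f))\<^sup>2) summable_on I \<and>
             A * (norm f)\<^sup>2 \<le> (\<Sum>\<^sub>\<infinity>i\<in>I. (norm (\<Lambda> i f))\<^sup>2) \<and>
             (\<Sum>\<^sub>\<infinity>i\<in>I. (norm (\<Lambda> i f))\<^sup>2) \<le> B * (norm f)\<^sup>2))"

definition g_frame_op :: "int set \<Rightarrow> (int \<Rightarrow> 'a::complex_inner \<Rightarrow> 'b::complex_inner) \<Rightarrow> 'a \<Rightarrow> 'a" where
  "g_frame_op I \<Lambda> f = (\<Sum>\<^sub>\<infinity>i\<in>I. cadjoint (\<Lambda> i) (\<Lambda> i f))"

definition controlled_g_frame ::
  "int set \<Rightarrow> (int \<Rightarrow> 'a::complex_inner \<Rightarrow> 'b::complex_inner) \<Rightarrow> ('a \<Rightarrow> 'a) \<Rightarrow> ('a \<Rightarrow> 'a) \<Rightarrow> bool" where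
  "controlled_g_frame I \<Lambda> C C' \<longleftrightarrow> g_Bessel I \<Lambda> \<and>
     (\<exists>A B. 0 < A \<and>
        (\<forall>f. (\<lambda>i. cinner (\<Lambda> i (C f)) (\<Lambda> i (C' f))) summable_on I \<and>
             Im (\<Sum>\<^sub>\<infinity>i\<in>I. cinner (\<Lambda> i (C f)) (\<Lambda> i (C' f))) = 0 \<and>
             A * (norm f)\<^sup>2 \<le> Re (\<Sum>\<^sub>\<infinity>i\<in>I. cinner (\<Lambda> i (C f)) (\<Lambda> i (C' f))) \<and>
             Re (\<Sum>\<^sub>\<infinity>i\<in>I. cinner (\<Lambda> i (C f)) (\<Lambda> i (C' f))) \<le> B * (norm f)\<^sup>2))"

end

theory Submission
  imports Defs
begin

text \<open>Let \<open>S\<close> be the g-frame operator and \<open>T = C C'\<close>. Since \<open>C'\<close> is self-adjoint and all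
  three operators commute, the controlled sum \<open>\<Sum>\<^sub>i \<langle>\<Lambda>\<^sub>i C f, \<Lambda>\<^sub>i C' f\<rangle>\<close> equals
  \<open>\<langle>S T f, f\<rangle>\<close>, so it suffices to bound the self-adjoint operator \<open>S T\<close> above and below. The upper
  bound is its boundedness. The lower bound comes from the fact that commuting positive
  operators \<open>P \<ge> m\<close> and \<open>T \<ge> t\<close> satisfy \<open>P T \<ge> t m\<close>, applied first to \<open>C, C'\<close> and then to
  \<open>S, C C'\<close>. To prove it without square roots, write \<open>T = N (I - K)\<close> with \<open>0 \<le> K \<le> \<kappa> < 1\<close>;
  as \<open>K\<close> commutes with \<open>P\<close>, iterating the Cauchy-Schwarz inequality for the form
  \<open>\<langle>P \<cdot>, \<cdot>\<rangle>\<close> shows that \<open>K\<close> contracts this form by \<open>\<kappa>\<close>, whence \<open>\<langle>P T x, x\<rangle> \<ge> N (1 - \<kappa>) \<langle>P x, x\<rangle>\<close>.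

  The adjoints in the frame operator exist by the Riesz representation theorem, obtained from
  the point of minimal norm on a hyperplane \<open>{\<phi> = 1}\<close>.\<close>

section \<open>Complex inner products\<close>

lemma scaleC_zero_left [simp]: "(0::complex) *\<^sub>C (x::'a::complex_vector) = 0"
  using scaleR_scaleC[of 0 x] by simp

lemma cinner_add_right: "cinner x (y + z) = cinner x y + cinner x (z::'a::complex_inner)"
  by (simp only: cinner_commute[of x] cinner_add_left complex_cnj_add)

lemma cinner_scaleC_right: "cinner x (a *\<^sub>C y) = cnj a * cinner x (y::'a::complex_inner)"
  by (simp only: cinner_commute[of x] cinner_scaleC_left complex_cnj_mult)

lemma cinner_diff_left: "cinner (x - y) (z::'a::complex_inner) = cinner x z - cinner y z"
  using cinner_add_left[of "x - y" y z] by (simp add: eq_diff_eq)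

lemma cinner_diff_right: "cinner x (y - z::'a::complex_inner) = cinner x y - cinner x z"
  using cinner_add_right[of x "y - z" z] by (simp add: eq_diff_eq)

lemma cinner_zero_right [simp]: "cinner x (0::'a::complex_inner) = 0"
  using cinner_diff_right[of x 0 0] by simp

lemma cinner_zero_left [simp]: "cinner 0 (x::'a::complex_inner) = 0"
  using cinner_diff_left[of 0 0 x] by simp

lemma cinner_scaleR_left: "cinner (r *\<^sub>R x) (y::'a::complex_inner) = of_real r * cinner x y"
  by (simp add: scaleR_scaleC cinner_scaleC_left)

lemma cinner_scaleR_right: "cinner x (r *\<^sub>R y::'a::complex_inner) = of_real r * cinner x y"
  by (simp add: scaleR_scaleC cinner_scaleC_right)

lemma cinner_self_eq_norm_power2: "cinner x (x::'a::complex_inner) = of_real ((norm x)\<^sup>2)"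
proof -
  have "Im (cinner x x) = Im (cnj (cinner x x))" using cinner_commute[of x x] by simp
  then have "Im (cinner x x) = 0" by simp
  moreover have "(norm x)\<^sup>2 = Re (cinner x x)" using norm_eq_sqrt_cinner[of x] cinner_ge_zero[of x] by simp
  ultimately show ?thesis by (simp add: complex_eq_iff)
qed

lemma power2_norm_eq_cinner: "(norm x)\<^sup>2 = Re (cinner x (x::'a::complex_inner))"
  by (simp add: cinner_self_eq_norm_power2)

lemma cinner_ext_left: "(\<And>g. cinner a g = cinner b (g::'a::complex_inner)) \<Longrightarrow> a = b"
  using cinner_eq_zero_iff[of "a - b"] by (simp add: cinner_diff_left)

lemma cinner_ext_right: "(\<And>g. cinner g a = cinner g (b::'a::complex_inner)) \<Longrightarrow> a = b"
  using cinner_eq_zero_iff[of "a - b"] by (simp add: cinner_diff_right)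

lemma parallelogram_law:
  "(norm (x + y))\<^sup>2 + (norm (x - y))\<^sup>2 = 2 * (norm x)\<^sup>2 + 2 * (norm (y::'a::complex_inner))\<^sup>2"
proof -
  have "cinner (x + y) (x + y) = cinner x x + cinner x y + (cinner y x + cinner y y)"
    by (simp only: cinner_add_left cinner_add_right add.assoc add.left_commute)
  moreover have "cinner (x - y) (x - y) = cinner x x - cinner x y - (cinner y x - cinner y y)"
    by (simp add: cinner_diff_left cinner_diff_right algebra_simps)
  ultimately show ?thesis by (simp add: power2_norm_eq_cinner)
qed

lemma norm_scaleC: "norm (c *\<^sub>C (x::'a::complex_inner)) = cmod c * norm x"
proof -
  have "of_real ((norm (c *\<^sub>C x))\<^sup>2) = (c * cnj c) * of_real ((norm x)\<^sup>2)"
    by (simp only: cinner_self_eq_norm_power2[symmetric] cinner_scaleC_left cinner_scaleC_right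
        mult.assoc mult.left_commute)
  also have "c * cnj c = of_real ((cmod c)\<^sup>2)" by (rule complex_norm_square[symmetric])
  finally have "(norm (c *\<^sub>C x))\<^sup>2 = (cmod c * norm x)\<^sup>2"
    by (simp only: of_real_mult[symmetric] power_mult_distrib of_real_eq_iff)
  then show ?thesis by (simp add: power2_eq_iff_nonneg)
qed

lemma quadratic_nonneg_imp_discriminant:
  fixes a b c :: real
  assumes "\<And>t. 0 \<le> a * t\<^sup>2 - 2 * b * t + c" and "0 \<le> a"
  shows "b\<^sup>2 \<le> a * c"
proof (cases "a = 0")
  case True
  have "b = 0"
  proof (rule ccontr)
    assume "b \<noteq> 0"
    have "0 \<le> - 2 * b * ((c + 1) / (2 * b)) + c" using assms(1)[of "(c + 1) / (2 * b)"] True by simp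
    also have "\<dots> = -1" using \<open>b \<noteq> 0\<close> by (simp add: field_simps)
    finally show False by simp
  qed
  then show ?thesis using True by simp
next
  case False
  then have a: "a > 0" using assms(2) by simp
  have "0 \<le> a * (b / a)\<^sup>2 - 2 * b * (b / a) + c" by (rule assms(1))
  also have "\<dots> = c - b\<^sup>2 / a" using a by (simp add: field_simps power2_eq_square)
  finally show ?thesis using a by (simp add: field_simps)
qed

lemma le_one_if_pow2_bounded:
  fixes q C :: real
  assumes q: "0 \<le> q" and bound: "\<And>n. q ^ (2 ^ n) \<le> C"
  shows "q \<le> 1"
proof (rule ccontr)
  assume "\<not> q \<le> 1"
  then have q1: "q - 1 > 0" by simp
  obtain n :: nat where n: "C / (q - 1) < real n" using reals_Archimedean2 by blast
  have "1 + real (2 ^ n) * (q - 1) \<le> q ^ (2 ^ n)"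
    using Bernoulli_inequality[of "q - 1" "2 ^ n"] q1 by simp
  moreover have "real n * (q - 1) \<le> real (2 ^ n) * (q - 1)"
    using q1 less_exp[of n] by (intro mult_right_mono) auto
  moreover have "C < real n * (q - 1)" using n q1 by (simp add: pos_divide_less_eq)
  ultimately show False using bound[of n] by linarith
qed

locale hermitian_form =
  fixes B :: "'a::{complex_vector,real_normed_vector} \<Rightarrow> 'a \<Rightarrow> complex"
  assumes add_left: "B (x + y) z = B x z + B y z"
    and scaleC_left: "B (a *\<^sub>C x) y = a * B x y"
    and hermitian: "B x y = cnj (B y x)"
    and nonneg: "0 \<le> Re (B x x)"
begin

lemma add_right: "B x (y + z) = B x y + B x z"
  by (metis add_left hermitian complex_cnj_add)

lemma scaleC_right: "B x (a *\<^sub>C y) = cnj a * B x y"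
  by (metis hermitian scaleC_left complex_cnj_mult)

lemma Re_expand:
  "Re (B (x + c *\<^sub>C y) (x + c *\<^sub>C y)) = Re (B x x) + 2 * Re (cnj c * B x y) + (cmod c)\<^sup>2 * Re (B y y)"
proof -
  have "B (x + c *\<^sub>C y) (x + c *\<^sub>C y) = B x x + cnj (cnj c * B x y) + cnj c * B x y + (c * cnj c) * B y y"
    by (simp add: add_left add_right scaleC_left scaleC_right algebra_simps hermitian[of y x])
  then show ?thesis by (simp add: complex_norm_square[symmetric])
qed

lemma cauchy_schwarz: "(cmod (B x y))\<^sup>2 \<le> Re (B x x) * Re (B y y)"
proof -
  define u where "u = (if B x y = 0 then 1 else B x y / of_real (cmod (B x y)))"
  have u: "cmod u = 1" "cnj u * B x y = of_real (cmod (B x y))"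
    by (auto simp: u_def norm_divide complex_norm_square[symmetric] mult.commute power2_eq_square)
  have "0 \<le> Re (B y y) * t\<^sup>2 - 2 * cmod (B x y) * t + Re (B x x)" for t :: real
  proof -
    have "cnj (- (of_real t * u)) * B x y = - of_real t * (cnj u * B x y)" by simp
    also have "\<dots> = of_real (- t * cmod (B x y))" unfolding u(2) by simp
    finally have "Re (cnj (- (of_real t * u)) * B x y) = - t * cmod (B x y)"
      by (simp only: Re_complex_of_real)
    moreover have "(cmod (- (of_real t * u)))\<^sup>2 = t\<^sup>2" by (simp add: norm_mult u(1))
    ultimately show ?thesis using nonneg[of "x + (- (of_real t * u)) *\<^sub>C y"]
      by (simp add: Re_expand algebra_simps)
  qed
  from quadratic_nonneg_imp_discriminant[OF this nonneg] show ?thesis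
    by (simp add: mult.commute)
qed

lemma Re_cauchy_schwarz: "(Re (B x y))\<^sup>2 \<le> Re (B x x) * Re (B y y)"
proof -
  have "(Re (B x y))\<^sup>2 \<le> (cmod (B x y))\<^sup>2"
    using power_mono[OF abs_Re_le_cmod[of "B x y"] abs_ge_zero, of 2] by simp
  then show ?thesis using cauchy_schwarz by (rule order.trans)
qed

abbreviation quad :: "'a \<Rightarrow> real" where "quad x \<equiv> Re (B x x)"

lemma funpow_hermitian:
  assumes K: "\<And>x y. B (K x) y = B x (K y)"
  shows "B ((K ^^ k) x) y = B x ((K ^^ k) y)"
proof (induction k arbitrary: x y)
  case (Suc k)
  then show ?case by (simp add: K funpow_swap1)
qed simp

lemma iterated_cauchy_schwarz:
  assumes K: "\<And>x y. B (K x) y = B x (K y)"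
  shows "quad (K x) ^ (2 ^ n) \<le> quad ((K ^^ (2 ^ n)) x) * quad x ^ (2 ^ n - 1)"
proof (induction n)
  case (Suc n)
  define L where "L = K ^^ (2 ^ n)"
  have LL: "L (L x) = (K ^^ (2 ^ Suc n)) x" by (simp add: L_def funpow_add mult_2)
  have "(quad (L x))\<^sup>2 \<le> quad (L (L x)) * quad x"
    using Re_cauchy_schwarz[of "L (L x)" x] funpow_hermitian[OF K, of "2 ^ n" "L x" x]
    by (simp add: L_def)
  have "quad (K x) ^ (2 ^ Suc n) = (quad (K x) ^ (2 ^ n))\<^sup>2"
    by (simp add: power_mult[symmetric] mult.commute)
  also have "\<dots> \<le> (quad (L x) * quad x ^ (2 ^ n - 1))\<^sup>2"
    using Suc nonneg by (intro power_mono) (auto simp: L_def)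
  also have "\<dots> = (quad (L x))\<^sup>2 * quad x ^ (2 * (2 ^ n - 1))"
    by (simp add: power_mult_distrib power_mult[symmetric] mult.commute)
  also have "\<dots> \<le> quad (L (L x)) * quad x * quad x ^ (2 * (2 ^ n - 1))"
    using \<open>(quad (L x))\<^sup>2 \<le> quad (L (L x)) * quad x\<close> nonneg by (intro mult_right_mono) auto
  also have "\<dots> = quad (L (L x)) * quad x ^ (2 ^ Suc n - 1)"
  proof -
    have "2 * (2 ^ n - 1) + 1 = (2::nat) ^ Suc n - 1"
      using one_le_power[of "2::nat" n] by (simp only: power_Suc) arith
    then show ?thesis by (metis mult.assoc power_Suc Suc_eq_plus1 mult.commute)
  qed
  finally show ?case unfolding LL .
qed simp

text \<open>Iterated Cauchy-Schwarz bounds every power \<open>2^n\<close> of the ratio \<open>quad (K x) / (\<kappa>\<^sup>2 * quad x)\<close>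
  by \<open>M / m\<close>, so the ratio is at most 1.\<close>

lemma quad_contraction:
  assumes K: "\<And>x y. B (K x) y = B x (K y)" and \<kappa>: "0 < \<kappa>"
    and norm_pow: "\<And>k y. norm ((K ^^ k) y) \<le> \<kappa> ^ k * norm y"
    and m: "0 < m" and lower: "\<And>x. m * (norm x)\<^sup>2 \<le> quad x"
    and upper: "\<And>x. quad x \<le> M * (norm x)\<^sup>2"
  shows "quad (K x) \<le> \<kappa>\<^sup>2 * quad x"
proof (cases "x = 0")
  case True
  then show ?thesis using norm_pow[of 1 0] upper[of 0] nonneg[of 0] by simp
next
  case False
  then have "0 < m * (norm x)\<^sup>2" using m by simp
  then have Qx: "quad x > 0" and "0 < M * (norm x)\<^sup>2" using lower[of x] upper[of x] by linarith+
  then have M: "0 \<le> M" by (simp add: zero_less_mult_iff)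
  define q where "q = quad (K x) / (\<kappa>\<^sup>2 * quad x)"
  have "q ^ (2 ^ n) \<le> M / m" for n
  proof -
    define k :: nat where "k = 2 ^ n"
    have "quad ((K ^^ k) x) \<le> M * (norm ((K ^^ k) x))\<^sup>2" by (rule upper)
    also have "\<dots> \<le> M * (\<kappa> ^ k * norm x)\<^sup>2"
      using norm_pow[of k x] M by (intro mult_left_mono power_mono) auto
    also have "\<dots> = (M / m) * (\<kappa>\<^sup>2) ^ k * (m * (norm x)\<^sup>2)"
      using m by (simp add: power_mult_distrib power_mult[symmetric] mult.commute[of k])
    also have "\<dots> \<le> (M / m) * (\<kappa>\<^sup>2) ^ k * quad x"
      using lower[of x] M m by (intro mult_left_mono) auto
    finally have "quad (K x) ^ k \<le> (M / m) * (\<kappa>\<^sup>2) ^ k * quad x * quad x ^ (k - 1)"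
      using iterated_cauchy_schwarz[OF K, of x n] nonneg[of x] unfolding k_def[symmetric]
      by (meson mult_right_mono order_trans zero_le_power)
    also have "\<dots> = (M / m) * (\<kappa>\<^sup>2 * quad x) ^ k"
      by (cases k) (simp_all add: k_def power_mult_distrib mult_ac)
    finally show ?thesis
      using Qx \<kappa> by (simp add: q_def k_def power_divide divide_le_eq)
  qed
  then have "q \<le> 1" by (rule le_one_if_pow2_bounded[rotated]) (use Qx \<kappa> nonneg in \<open>simp add: q_def\<close>)
  then show ?thesis using Qx \<kappa> by (simp add: q_def divide_le_eq)
qed

lemma Re_contraction:
  assumes K: "\<And>x y. B (K x) y = B x (K y)" and \<kappa>: "0 < \<kappa>"
    and norm_pow: "\<And>k y. norm ((K ^^ k) y) \<le> \<kappa> ^ k * norm y"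
    and m: "0 < m" and lower: "\<And>x. m * (norm x)\<^sup>2 \<le> quad x"
    and upper: "\<And>x. quad x \<le> M * (norm x)\<^sup>2"
  shows "Re (B (K x) x) \<le> \<kappa> * quad x"
proof -
  have "(Re (B (K x) x))\<^sup>2 \<le> quad (K x) * quad x" by (rule Re_cauchy_schwarz)
  also have "\<dots> \<le> \<kappa>\<^sup>2 * quad x * quad x"
    by (rule mult_right_mono[OF quad_contraction[OF assms] nonneg])
  also have "\<dots> = (\<kappa> * quad x)\<^sup>2" by (simp add: power2_eq_square)
  finally have "\<bar>Re (B (K x) x)\<bar> \<le> \<bar>\<kappa> * quad x\<bar>" by (simp only: abs_le_square_iff)
  then show ?thesis using \<kappa> nonneg[of x] by simp
qed

end

lemma hermitian_form_cinner: "hermitian_form (cinner :: 'a::complex_inner \<Rightarrow> _)"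
  by unfold_locales (rule cinner_add_left cinner_scaleC_left cinner_commute cinner_ge_zero)+

lemma cmod_cinner_le: "cmod (cinner x (y::'a::complex_inner)) \<le> norm x * norm y"
proof -
  have "(cmod (cinner x y))\<^sup>2 \<le> (norm x * norm y)\<^sup>2"
    using hermitian_form.cauchy_schwarz[OF hermitian_form_cinner, of x y]
    unfolding power2_norm_eq_cinner[symmetric] power_mult_distrib .
  then show ?thesis by (rule power2_le_imp_le) simp
qed

section \<open>Bounded operators and adjoints\<close>

lemma bounded_clinear_add: "bounded_clinear T \<Longrightarrow> T (x + y) = T x + T y"
  unfolding bounded_clinear_def by blast

lemma bounded_clinear_scaleC: "bounded_clinear T \<Longrightarrow> T (a *\<^sub>C x) = a *\<^sub>C T x"
  unfolding bounded_clinear_def by blast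

lemma bounded_clinear_pos_bound:
  assumes "bounded_clinear T"
  obtains K where "K > 0" "\<And>x. norm (T x) \<le> norm x * K"
proof -
  from assms obtain K where K: "\<And>x. norm (T x) \<le> norm x * K" unfolding bounded_clinear_def by blast
  have "norm (T x) \<le> norm x * max K 1" for x
    using K[of x] mult_left_mono[of K "max K 1" "norm x"] by simp
  then show ?thesis using that[of "max K 1"] by simp
qed

lemma bounded_clinear_imp_bounded_linear:
  assumes "bounded_clinear T" shows "bounded_linear T"
proof -
  from assms obtain K where "\<And>x. norm (T x) \<le> norm x * K" unfolding bounded_clinear_def by blast
  then show ?thesis
    by (intro bounded_linear_intro[of T K])
      (simp_all add: bounded_clinear_add[OF assms] bounded_clinear_scaleC[OF assms] scaleR_scaleC)
qed

lemma bounded_clinear_zero: "bounded_clinear T \<Longrightarrow> T 0 = 0"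
  by (rule linear_0[OF bounded_linear.linear[OF bounded_clinear_imp_bounded_linear]])

lemma bounded_clinear_compose:
  assumes "bounded_clinear S" "bounded_clinear T" shows "bounded_clinear (\<lambda>x. S (T x))"
proof -
  obtain K1 where "K1 > 0" "\<And>x. norm (S x) \<le> norm x * K1" using bounded_clinear_pos_bound[OF assms(1)] by blast
  moreover obtain K2 where "K2 > 0" "\<And>x. norm (T x) \<le> norm x * K2" using bounded_clinear_pos_bound[OF assms(2)] by blast
  ultimately have "norm (S (T x)) \<le> norm x * (K2 * K1)" for x
    by (metis mult.assoc mult_right_mono order_less_imp_le order_trans)
  then show ?thesis using assms unfolding bounded_clinear_def by auto
qed

lemma bounded_clinear_quadratic_bound:
  assumes "bounded_clinear T"
  obtains K where "K > 0" "\<And>x. Re (cinner (T x) x) \<le> K * (norm x)\<^sup>2"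
proof -
  obtain K where K: "K > 0" "\<And>x. norm (T x) \<le> norm x * K" using bounded_clinear_pos_bound[OF assms] by blast
  have "Re (cinner (T x) x) \<le> K * (norm x)\<^sup>2" for x
  proof -
    have "Re (cinner (T x) x) \<le> norm (T x) * norm x"
      using complex_Re_le_cmod cmod_cinner_le order_trans by blast
    also have "\<dots> \<le> norm x * K * norm x" using K(2)[of x] by (simp add: mult_right_mono)
    finally show ?thesis by (simp add: power2_eq_square mult_ac)
  qed
  then show ?thesis using that K(1) by blast
qed

lemma bounded_bilinear_cinner: "bounded_bilinear (cinner :: 'a::complex_inner \<Rightarrow> 'a \<Rightarrow> complex)"
proof
  show "\<exists>K. \<forall>a b::'a. norm (cinner a b) \<le> norm a * norm b * K"
    by (rule exI[of _ 1]) (simp add: cmod_cinner_le)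
qed (simp_all add: cinner_add_left cinner_add_right cinner_scaleR_left cinner_scaleR_right
    scaleR_conv_of_real)

lemma minimizing_sequence_Cauchy:
  fixes xs :: "nat \<Rightarrow> 'a::complex_inner"
  assumes d: "0 \<le> d"
    and mid: "\<And>m n. 2 * d \<le> norm (xs m + xs n)"
    and small: "\<And>n. norm (xs n) \<le> d + inverse (real (Suc n))"
  shows "Cauchy xs"
proof (rule metric_CauchyI)
  define e where "e n = inverse (real (Suc n))" for n
  have e: "0 < e n" "e n \<le> 1" for n by (auto simp: e_def inverse_le_1_iff)
  have sq: "(norm (xs n))\<^sup>2 \<le> d\<^sup>2 + (2 * d + 1) * e n" for n
  proof -
    have "(norm (xs n))\<^sup>2 \<le> (d + e n)\<^sup>2" using small[of n] by (intro power_mono) (simp_all add: e_def)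
    also have "\<dots> \<le> d\<^sup>2 + (2 * d + 1) * e n"
      using e[of n] d by (simp add: power2_eq_square algebra_simps mult_left_le)
    finally show ?thesis .
  qed
  have dist_sq: "(dist (xs m) (xs n))\<^sup>2 \<le> 2 * (2 * d + 1) * (e m + e n)" for m n
  proof -
    have "(2 * d)\<^sup>2 \<le> (norm (xs m + xs n))\<^sup>2" using mid[of m n] d by (intro power_mono) auto
    then show ?thesis
      using parallelogram_law[of "xs m" "xs n"] sq[of m] sq[of n]
      by (simp add: dist_norm power2_eq_square algebra_simps)
  qed
  fix r :: real assume r: "0 < r"
  obtain N where N: "e N < r\<^sup>2 / (4 * (2 * d + 1))"
    using reals_Archimedean[of "r\<^sup>2 / (4 * (2 * d + 1))"] r d by (auto simp: e_def)
  have "dist (xs m) (xs n) < r" if "m \<ge> N" "n \<ge> N" for m n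
  proof -
    have "e m \<le> e N" "e n \<le> e N" using that by (auto simp: e_def intro!: le_imp_inverse_le)
    have "(dist (xs m) (xs n))\<^sup>2 \<le> 2 * (2 * d + 1) * (e m + e n)" by (rule dist_sq)
    also have "\<dots> \<le> 2 * (2 * d + 1) * (e N + e N)"
      using \<open>e m \<le> e N\<close> \<open>e n \<le> e N\<close> d by (intro mult_left_mono add_mono) auto
    also have "\<dots> < r\<^sup>2" using N d by (simp add: field_simps)
    finally show ?thesis using r by (simp add: power2_less_imp_less)
  qed
  then show "\<exists>N. \<forall>m\<ge>N. \<forall>n\<ge>N. dist (xs m) (xs n) < r" by blast
qed

lemma cinner_eq_0_if_norm_le_add:
  fixes u h :: "'a::complex_inner"
  assumes min: "\<And>c. norm u \<le> norm (u + c *\<^sub>C h)"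
  shows "cinner u h = 0"
proof -
  define a where "a = cinner u h"
  define s where "s = 1 / ((norm h)\<^sup>2 + 1)"
  have s: "0 < s" "s * (norm h)\<^sup>2 < 1" by (simp_all add: s_def field_simps add_pos_nonneg)
  define c where "c = - (of_real s * a)"
  have "cnj c * a = - of_real s * (a * cnj a)" by (simp add: c_def)
  also have "\<dots> = of_real (- s * (cmod a)\<^sup>2)" unfolding complex_norm_square[symmetric] by simp
  finally have "Re (cnj c * a) = - s * (cmod a)\<^sup>2" by (simp only: Re_complex_of_real)
  moreover have "cmod c = s * cmod a" using s by (simp add: c_def norm_mult)
  ultimately have "(norm (u + c *\<^sub>C h))\<^sup>2 = (norm u)\<^sup>2 - 2 * s * (cmod a)\<^sup>2 + (s * cmod a)\<^sup>2 * (norm h)\<^sup>2"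
    using hermitian_form.Re_expand[OF hermitian_form_cinner, of u c h]
    by (simp only: power2_norm_eq_cinner a_def)
  moreover have "(norm u)\<^sup>2 \<le> (norm (u + c *\<^sub>C h))\<^sup>2" using min[of c] by (simp add: power_mono)
  ultimately have "0 \<le> s * (cmod a)\<^sup>2 * (s * (norm h)\<^sup>2 - 2)"
    by (simp add: algebra_simps power2_eq_square)
  with s have "(cmod a)\<^sup>2 \<le> 0" by (simp add: mult_le_0_iff zero_le_mult_iff)
  then show ?thesis by (simp add: a_def)
qed

lemma min_norm_in_hyperplane:
  fixes \<phi> :: "'a::{complex_inner,complete_space} \<Rightarrow> complex"
  assumes lin: "bounded_linear \<phi>" and sc: "\<And>c x. \<phi> (c *\<^sub>C x) = c * \<phi> x" and x0: "\<phi> x0 \<noteq> 0"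
  obtains u where "\<phi> u = 1" "\<And>y. \<phi> y = 1 \<Longrightarrow> norm u \<le> norm y"
proof -
  define d where "d = Inf (norm ` {x. \<phi> x = 1})"
  have ne: "norm ` {x. \<phi> x = 1} \<noteq> {}" using x0 sc[of "1 / \<phi> x0" x0] by auto
  have d_le: "d \<le> norm y" if "\<phi> y = 1" for y
    unfolding d_def by (rule cInf_lower) (use that in \<open>auto intro: bdd_belowI[of _ 0]\<close>)
  have d: "0 \<le> d" unfolding d_def by (rule cInf_greatest[OF ne]) auto
  have "\<exists>x. \<phi> x = 1 \<and> norm x < d + inverse (real (Suc n))" for n
    using cInf_lessD[OF ne, of "d + inverse (real (Suc n))"] by (auto simp: d_def)
  then obtain xs where xs1: "\<And>n. \<phi> (xs n) = 1"
    and xs_small: "\<And>n. norm (xs n) < d + inverse (real (Suc n))"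
    by metis
  have "2 * d \<le> norm (xs m + xs n)" for m n
  proof -
    have "\<phi> ((1 / 2) *\<^sub>C (xs m + xs n)) = 1"
      by (simp add: sc linear_add[OF bounded_linear.linear[OF lin]] xs1)
    then have "d \<le> norm ((1 / 2) *\<^sub>C (xs m + xs n))" by (rule d_le)
    then show ?thesis by (simp add: norm_scaleC)
  qed
  then have "Cauchy xs" using d xs_small by (intro minimizing_sequence_Cauchy) (auto intro: less_imp_le)
  then obtain u where u: "xs \<longlonglongrightarrow> u" using Cauchy_convergent convergent_def by blast
  have "(\<lambda>n. \<phi> (xs n)) \<longlonglongrightarrow> \<phi> u" by (rule bounded_linear.tendsto[OF lin u])
  then have "(\<lambda>n. 1) \<longlonglongrightarrow> \<phi> u" by (simp add: xs1)
  then have "\<phi> u = 1" using LIMSEQ_unique tendsto_const by metis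
  moreover have "norm u \<le> d"
  proof (rule LIMSEQ_le[OF tendsto_norm[OF u]])
    show "(\<lambda>n. d + inverse (real (Suc n))) \<longlonglongrightarrow> d"
      using tendsto_add[OF tendsto_const LIMSEQ_inverse_real_of_nat, of d] by simp
  qed (use xs_small less_imp_le in blast)
  ultimately show ?thesis using that d_le by force
qed

lemma riesz_representation:
  fixes \<phi> :: "'a::{complex_inner,complete_space} \<Rightarrow> complex"
  assumes add: "\<And>x y. \<phi> (x + y) = \<phi> x + \<phi> y"
    and sc: "\<And>c x. \<phi> (c *\<^sub>C x) = c * \<phi> x"
    and bound: "\<And>x. cmod (\<phi> x) \<le> norm x * K"
  shows "\<exists>z. \<forall>x. \<phi> x = cinner x z"
proof (cases "\<forall>x. \<phi> x = 0")
  case True then show ?thesis by (intro exI[of _ 0]) simp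
next
  case False
  have lin: "bounded_linear \<phi>"
    by (rule bounded_linear_intro[of \<phi> K]) (simp_all add: add bound scaleR_scaleC sc scaleR_conv_of_real)
  from False obtain u where u: "\<phi> u = 1" and u_min: "\<And>y. \<phi> y = 1 \<Longrightarrow> norm u \<le> norm y"
    using min_norm_in_hyperplane[OF lin sc] by blast
  have orth: "cinner u h = 0" if "\<phi> h = 0" for h
    by (rule cinner_eq_0_if_norm_le_add) (simp add: u_min add sc u that)
  have "u \<noteq> 0" using u sc[of 0 u] by auto
  have "\<phi> x = cinner x ((1 / (norm u)\<^sup>2) *\<^sub>R u)" for x
  proof -
    have "\<phi> (x - \<phi> x *\<^sub>C u) = 0"
      using add[of "x - \<phi> x *\<^sub>C u" "\<phi> x *\<^sub>C u"] by (simp add: sc u)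
    then have "cinner u (x - \<phi> x *\<^sub>C u) = 0" by (rule orth)
    then have "cinner u x = cnj (\<phi> x) * cinner u u" by (simp add: cinner_diff_right cinner_scaleC_right)
    then have "cinner x u = \<phi> x * of_real ((norm u)\<^sup>2)"
      using cinner_commute[of x u] by (simp add: cinner_self_eq_norm_power2)
    then show ?thesis using \<open>u \<noteq> 0\<close> by (simp add: cinner_scaleR_right)
  qed
  then show ?thesis by blast
qed

lemma cadjoint_exists:
  fixes T :: "'a::{complex_inner,complete_space} \<Rightarrow> 'b::complex_inner"
  assumes T: "bounded_clinear T"
  shows "\<exists>T'. \<forall>x y. cinner (T x) y = cinner x (T' y)"
proof -
  obtain K where K: "\<And>x. norm (T x) \<le> norm x * K" using bounded_clinear_pos_bound[OF T] by blast
  have "\<exists>z. \<forall>x. cinner (T x) y = cinner x z" for y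
  proof (rule riesz_representation[where K = "K * norm y"])
    show "cmod (cinner (T x) y) \<le> norm x * (K * norm y)" for x
      using cmod_cinner_le[of "T x" y] mult_right_mono[OF K[of x] norm_ge_zero[of y]]
      by (simp add: mult.assoc)
  qed (simp_all add: bounded_clinear_add[OF T] bounded_clinear_scaleC[OF T]
      cinner_add_left cinner_scaleC_left)
  then show ?thesis by metis
qed

lemma cinner_cadjoint:
  fixes T :: "'a::{complex_inner,complete_space} \<Rightarrow> 'b::complex_inner"
  assumes "bounded_clinear T"
  shows "cinner (T x) y = cinner x (cadjoint T y)"
proof -
  obtain T' where T': "\<forall>x y. cinner (T x) y = cinner x (T' y)" using cadjoint_exists[OF assms] by blast
  have "cadjoint T = T'"
    unfolding cadjoint_def
  proof (rule the_equality)
    fix T'' assume "\<forall>x y. cinner (T x) y = cinner x (T'' y)"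
    with T' show "T'' = T'" by (intro ext cinner_ext_right) simp
  qed (rule T')
  with T' show ?thesis by simp
qed

lemma cinner_cadjoint_left:
  fixes T :: "'a::{complex_inner,complete_space} \<Rightarrow> 'b::complex_inner"
  assumes "bounded_clinear T"
  shows "cinner (cadjoint T y) x = cinner y (T x)"
  by (metis assms cinner_cadjoint cinner_commute)

section \<open>Self-adjoint operators\<close>

definition selfadjoint :: "('a::complex_inner \<Rightarrow> 'a) \<Rightarrow> bool" where
  "selfadjoint T \<longleftrightarrow> (\<forall>x y. cinner (T x) y = cinner x (T y))"

lemma selfadjointD: "selfadjoint T \<Longrightarrow> cinner (T x) y = cinner x (T y)"
  unfolding selfadjoint_def by blast

lemma selfadjoint_compose:
  assumes "selfadjoint S" "selfadjoint T" "\<And>x. S (T x) = T (S x)"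
  shows "selfadjoint (\<lambda>x. S (T x))"
  unfolding selfadjoint_def
  by (intro allI) (simp only: selfadjointD[OF assms(1)] selfadjointD[OF assms(2)] assms(3)[symmetric])

lemma Im_cinner_selfadjoint:
  assumes "selfadjoint T" shows "Im (cinner (T x) x) = 0"
proof -
  have "cinner (T x) x = cinner x (T x)" by (rule selfadjointD[OF assms])
  also have "\<dots> = cnj (cinner (T x) x)" by (rule cinner_commute)
  finally have "Im (cinner (T x) x) = Im (cnj (cinner (T x) x))" by (rule arg_cong)
  then show ?thesis by simp
qed

lemma hermitian_form_selfadjoint:
  assumes "bounded_clinear T" "selfadjoint T" "\<And>x. 0 \<le> Re (cinner (T x) x)"
  shows "hermitian_form (\<lambda>x y. cinner (T x) y)"
proof
  show "cinner (T (x + y)) z = cinner (T x) z + cinner (T y) z" for x y z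
    by (simp only: bounded_clinear_add[OF assms(1)] cinner_add_left)
  show "cinner (T (a *\<^sub>C x)) y = a * cinner (T x) y" for a x y
    by (simp only: bounded_clinear_scaleC[OF assms(1)] cinner_scaleC_left)
  show "cinner (T x) y = cnj (cinner (T y) x)" for x y
    by (simp only: selfadjointD[OF assms(2), of x y] cinner_commute[of x "T y"])
qed (rule assms(3))

lemma selfadjoint_if_real_quadratic_form:
  fixes C :: "'a::complex_inner \<Rightarrow> 'a"
  assumes C: "bounded_clinear C" and real: "\<And>z. Im (cinner (C z) z) = 0"
  shows "selfadjoint C"
  unfolding selfadjoint_def
proof (intro allI)
  fix x y
  define a b where "a = cinner (C x) y" and "b = cinner (C y) x"
  \<comment> \<open>polarization with the directions \<open>x + y\<close> and \<open>x + \<i> y\<close>\<close>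
  have "cinner (C (x + y)) (x + y) = cinner (C x) x + a + b + cinner (C y) y"
    by (simp add: bounded_clinear_add[OF C] cinner_add_left cinner_add_right a_def b_def)
  then have "Im a + Im b = 0" using real[of "x + y"] real[of x] real[of y] by simp
  moreover have "cinner (C (x + \<i> *\<^sub>C y)) (x + \<i> *\<^sub>C y)
      = cinner (C x) x + cnj \<i> * a + \<i> * b + (\<i> * cnj \<i>) * cinner (C y) y"
    unfolding bounded_clinear_add[OF C] bounded_clinear_scaleC[OF C] cinner_add_left cinner_add_right
      cinner_scaleC_left cinner_scaleC_right a_def b_def
    by (simp only: add.assoc add.left_commute mult.assoc distrib_left mult.left_commute)
  then have "Re b - Re a = 0" using real[of "x + \<i> *\<^sub>C y"] real[of x] real[of y] by simp
  ultimately have "a = cnj b" by (simp add: complex_eq_iff)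
  then show "cinner (C x) y = cinner x (C y)" by (simp add: a_def b_def cinner_commute[of x])
qed

lemma norm_le_if_quadratic_form_le:
  fixes L :: "'a::complex_inner \<Rightarrow> 'a"
  assumes lin: "linear L" and sa: "selfadjoint L"
    and nonneg: "\<And>y. 0 \<le> Re (cinner (L y) y)"
    and le: "\<And>y. Re (cinner (L y) y) \<le> k * (norm y)\<^sup>2"
  shows "norm (L x) \<le> k * norm x"
proof (cases "x = 0 \<or> L x = 0")
  case True
  have "0 \<le> k" if "x \<noteq> 0"
  proof -
    have "0 \<le> k * (norm x)\<^sup>2" using nonneg[of x] le[of x] by linarith
    then show ?thesis using that by (simp add: zero_le_mult_iff)
  qed
  then show ?thesis using True linear_0[OF lin] by (cases "x = 0") auto
next
  case False
  define y where "y = (norm x / norm (L x)) *\<^sub>R L x"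
  have ny: "norm y = norm x" using False by (simp add: y_def)
  have Re_Lxy: "Re (cinner (L x) y) = norm x * norm (L x)"
    using False by (simp add: y_def cinner_scaleR_right power2_norm_eq_cinner[symmetric] power2_eq_square)
  \<comment> \<open>polarization identity for the real part of the form of \<open>L\<close>\<close>
  have expand_plus: "cinner (L (x + y)) (x + y) = cinner (L x) x + cinner (L x) y + cinner (L y) x + cinner (L y) y"
    unfolding linear_add[OF lin] cinner_add_left cinner_add_right by (simp only: add.assoc add.left_commute)
  have expand_minus: "cinner (L (x - y)) (x - y) = cinner (L x) x - cinner (L x) y - cinner (L y) x + cinner (L y) y"
    unfolding linear_diff[OF lin] cinner_diff_left cinner_diff_right by (simp add: algebra_simps)
  have "cinner (L y) x = cnj (cinner (L x) y)"
    using selfadjointD[OF sa, of y x] cinner_commute[of y "L x"] by simp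
  then have "4 * Re (cinner (L x) y) = Re (cinner (L (x + y)) (x + y)) - Re (cinner (L (x - y)) (x - y))"
    unfolding expand_plus expand_minus by simp
  also have "\<dots> \<le> k * ((norm (x + y))\<^sup>2 + (norm (x - y))\<^sup>2)"
    using le[of "x + y"] nonneg[of "x - y"] le[of "x - y"] by (simp add: algebra_simps)
  also have "\<dots> = 4 * k * (norm x)\<^sup>2" by (simp add: parallelogram_law ny)
  finally have "norm x * norm (L x) \<le> norm x * (k * norm x)"
    by (simp add: Re_Lxy power2_eq_square mult_ac)
  then show ?thesis using False by simp
qed

lemma norm_diff_scaled_le:
  fixes T :: "'a::complex_inner \<Rightarrow> 'a"
  assumes T: "bounded_clinear T" "selfadjoint T"
    and lower: "\<And>y. t * (norm y)\<^sup>2 \<le> Re (cinner (T y) y)"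
    and upper: "\<And>y. Re (cinner (T y) y) \<le> M * (norm y)\<^sup>2" and N: "0 < N" "M \<le> N"
  shows "norm (x - (1 / N) *\<^sub>R T x) \<le> (1 - t / N) * norm x"
proof -
  define K where "K y = y - (1 / N) *\<^sub>R T y" for y
  have linT: "linear T" by (rule bounded_linear.linear[OF bounded_clinear_imp_bounded_linear[OF T(1)]])
  have linK: "linear K"
    by (rule linearI) (simp_all add: K_def linear_add[OF linT] linear_scale[OF linT] algebra_simps)
  have saK: "selfadjoint K"
    by (simp add: selfadjoint_def K_def cinner_diff_left cinner_diff_right cinner_scaleR_left
        cinner_scaleR_right selfadjointD[OF T(2)])
  have Re_K: "Re (cinner (K y) y) = (norm y)\<^sup>2 - Re (cinner (T y) y) / N" for y
  proof -
    have "cinner (K y) y = cinner y y - of_real (1 / N) * cinner (T y) y"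
      by (simp only: K_def cinner_diff_left cinner_scaleR_left)
    then show ?thesis unfolding power2_norm_eq_cinner by simp
  qed
  have "norm (K x) \<le> (1 - t / N) * norm x"
  proof (rule norm_le_if_quadratic_form_le[OF linK saK])
    fix z
    have "Re (cinner (T z) z) \<le> N * (norm z)\<^sup>2"
      using upper[of z] mult_right_mono[OF N(2), of "(norm z)\<^sup>2"] by simp
    then show "0 \<le> Re (cinner (K z) z)" using N by (simp add: Re_K pos_divide_le_eq mult.commute)
    have "t / N * (norm z)\<^sup>2 \<le> Re (cinner (T z) z) / N"
      using divide_right_mono[OF lower[of z] less_imp_le[OF N(1)]] by simp
    then show "Re (cinner (K z) z) \<le> (1 - t / N) * (norm z)\<^sup>2"
      unfolding Re_K left_diff_distrib by linarith
  qed
  then show ?thesis by (simp add: K_def)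
qed

lemma selfadjoint_product_lower_bound:
  fixes P T :: "'a::complex_inner \<Rightarrow> 'a"
  assumes P: "bounded_clinear P" "selfadjoint P"
    and m: "0 < m" "\<And>x. m * (norm x)\<^sup>2 \<le> Re (cinner (P x) x)"
    and T: "bounded_clinear T" "selfadjoint T"
    and t: "0 < t" "\<And>x. t * (norm x)\<^sup>2 \<le> Re (cinner (T x) x)"
    and comm: "\<And>x. P (T x) = T (P x)"
  shows "t * m * (norm x)\<^sup>2 \<le> Re (cinner (P (T x)) x)"
proof -
  obtain KT where KT: "0 < KT" "\<And>y. Re (cinner (T y) y) \<le> KT * (norm y)\<^sup>2"
    using bounded_clinear_quadratic_bound[OF T(1)] by blast
  obtain M where M: "\<And>y. Re (cinner (P y) y) \<le> M * (norm y)\<^sup>2"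
    using bounded_clinear_quadratic_bound[OF P(1)] by blast
  define N \<kappa> where "N = t + KT" and "\<kappa> = 1 - t / N"
  have N: "0 < N" "KT \<le> N" and \<kappa>: "0 < \<kappa>"
    using t KT by (simp_all add: N_def \<kappa>_def field_simps)
  \<comment> \<open>\<open>T = N (I - K)\<close> with \<open>\<parallel>K\<parallel> \<le> \<kappa> < 1\<close>; \<open>K\<close> commutes with \<open>P\<close>, so it also contracts the form of \<open>P\<close>\<close>
  define K where "K y = y - (1 / N) *\<^sub>R T y" for y
  have K_pow: "norm ((K ^^ k) y) \<le> \<kappa> ^ k * norm y" for k y
  proof (induction k)
    case (Suc k)
    have "norm (K ((K ^^ k) y)) \<le> \<kappa> * norm ((K ^^ k) y)"
      unfolding K_def \<kappa>_def by (rule norm_diff_scaled_le[OF T t(2) KT(2) N])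
    also have "\<dots> \<le> \<kappa> * (\<kappa> ^ k * norm y)" using Suc \<kappa> by (simp add: mult_left_mono)
    finally show ?case by (simp add: mult.assoc)
  qed simp
  have linP: "linear P" by (rule bounded_linear.linear[OF bounded_clinear_imp_bounded_linear[OF P(1)]])
  interpret PB: hermitian_form "\<lambda>x y. cinner (P x) y"
  proof (rule hermitian_form_selfadjoint[OF P])
    fix x :: 'a
    have "0 \<le> m * (norm x)\<^sup>2" using m(1) by simp
    then show "0 \<le> Re (cinner (P x) x)" using m(2)[of x] by linarith
  qed
  have "cinner (P (K x)) y = cinner (P x) (K y)" for x y
    using linear_diff[OF linP] linear_scale[OF linP] comm
    by (simp add: K_def cinner_diff_left cinner_diff_right cinner_scaleR_left cinner_scaleR_right
        selfadjointD[OF T(2)])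
  then have ReK: "Re (cinner (P (K x)) x) \<le> \<kappa> * Re (cinner (P x) x)"
    by (rule PB.Re_contraction[OF _ \<kappa> K_pow m(1) m(2) M])
  have "T x = N *\<^sub>R (x - K x)" using N by (simp add: K_def)
  then have "Re (cinner (P (T x)) x) = N * (Re (cinner (P x) x) - Re (cinner (P (K x)) x))"
    by (simp add: linear_scale[OF linP] linear_diff[OF linP] cinner_scaleR_left cinner_diff_left)
  also have "\<dots> \<ge> N * ((1 - \<kappa>) * Re (cinner (P x) x))"
    using ReK N by (intro mult_left_mono) (auto simp: algebra_simps)
  finally have "t * Re (cinner (P x) x) \<le> Re (cinner (P (T x)) x)" using N by (simp add: \<kappa>_def)
  moreover have "t * (m * (norm x)\<^sup>2) \<le> t * Re (cinner (P x) x)" using m(2) t(1) by simp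
  ultimately show ?thesis by (simp add: mult.assoc)
qed

definition strictly_positive :: "('a::complex_inner \<Rightarrow> 'a) \<Rightarrow> bool" where
  "strictly_positive T \<longleftrightarrow> bounded_clinear T \<and> selfadjoint T \<and>
     (\<exists>m>0. \<forall>x. m * (norm x)\<^sup>2 \<le> Re (cinner (T x) x))"

lemma strictly_positive_compose:
  assumes "strictly_positive P" "strictly_positive T" and comm: "\<And>x. P (T x) = T (P x)"
  shows "strictly_positive (\<lambda>x. P (T x))"
proof -
  from assms(1) obtain m where P: "bounded_clinear P" "selfadjoint P"
    and m: "0 < m" "\<And>x. m * (norm x)\<^sup>2 \<le> Re (cinner (P x) x)"
    unfolding strictly_positive_def by blast
  from assms(2) obtain t where T: "bounded_clinear T" "selfadjoint T"
    and t: "0 < t" "\<And>x. t * (norm x)\<^sup>2 \<le> Re (cinner (T x) x)"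
    unfolding strictly_positive_def by blast
  show ?thesis
    unfolding strictly_positive_def
    using bounded_clinear_compose[OF P(1) T(1)] selfadjoint_compose[OF P(2) T(2) comm]
      selfadjoint_product_lower_bound[OF P m T t comm] m(1) t(1)
    by (metis mult_pos_pos)
qed

lemma GLplus_bounded_clinear: "GLplus C \<Longrightarrow> bounded_clinear C"
  unfolding GLplus_def by blast

lemma GLplus_nonneg:
  assumes "GLplus C" shows "0 \<le> Re (cinner (C x) x)"
  using assms bounded_clinear_zero[OF GLplus_bounded_clinear[OF assms]]
  unfolding GLplus_def by (cases "x = 0") (auto simp: less_imp_le)

lemma GLplus_selfadjoint:
  assumes "GLplus C" shows "selfadjoint C"
proof (rule selfadjoint_if_real_quadratic_form[OF GLplus_bounded_clinear[OF assms]])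
  show "Im (cinner (C z) z) = 0" for z
    using assms bounded_clinear_zero[OF GLplus_bounded_clinear[OF assms]]
    unfolding GLplus_def by (cases "z = 0") auto
qed

lemma norm_power2_le_quadratic_form:
  fixes C :: "'a::complex_inner \<Rightarrow> 'a"
  assumes C: "bounded_clinear C" "selfadjoint C" and nonneg: "\<And>x. 0 \<le> Re (cinner (C x) x)"
    and upper: "\<And>x. Re (cinner (C x) x) \<le> K * (norm x)\<^sup>2"
  shows "(norm (C x))\<^sup>2 \<le> K * Re (cinner (C x) x)"
proof (cases "C x = 0")
  case True
  then show ?thesis using nonneg[of x] upper[of x] by (simp add: bounded_clinear_zero[OF C(1)])
next
  case False
  interpret CB: hermitian_form "\<lambda>x y. cinner (C x) y"
    by (rule hermitian_form_selfadjoint[OF C nonneg])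
  have "((norm (C x))\<^sup>2)\<^sup>2 \<le> Re (cinner (C x) x) * Re (cinner (C (C x)) (C x))"
    using CB.cauchy_schwarz[of x "C x"] by (simp add: cinner_self_eq_norm_power2 norm_power)
  also have "\<dots> \<le> Re (cinner (C x) x) * (K * (norm (C x))\<^sup>2)"
    using upper[of "C x"] nonneg[of x] by (rule mult_left_mono)
  finally have "(norm (C x))\<^sup>2 * (norm (C x))\<^sup>2 \<le> (K * Re (cinner (C x) x)) * (norm (C x))\<^sup>2"
    by (simp add: power2_eq_square mult_ac)
  from mult_right_le_imp_le[OF this] show ?thesis using False by simp
qed

lemma GLplus_strictly_positive:
  assumes "GLplus C" shows "strictly_positive C"
proof -
  have C: "bounded_clinear C" by (rule GLplus_bounded_clinear[OF assms])
  obtain D where D: "bounded_clinear D" "\<And>f. D (C f) = f" using assms unfolding GLplus_def by blast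
  obtain KC where KC: "0 < KC" "\<And>x. Re (cinner (C x) x) \<le> KC * (norm x)\<^sup>2"
    using bounded_clinear_quadratic_bound[OF C] by blast
  obtain KD where KD: "0 < KD" "\<And>x. norm (D x) \<le> norm x * KD"
    using bounded_clinear_pos_bound[OF D(1)] by blast
  have "(norm x)\<^sup>2 \<le> (KD\<^sup>2 * KC) * Re (cinner (C x) x)" for x
  proof -
    have "(norm x)\<^sup>2 \<le> (norm (C x) * KD)\<^sup>2" using KD(2)[of "C x"] D(2)[of x] by (simp add: power_mono)
    also have "\<dots> \<le> KD\<^sup>2 * (KC * Re (cinner (C x) x))"
      using mult_left_mono[OF norm_power2_le_quadratic_form[OF C GLplus_selfadjoint[OF assms]
          GLplus_nonneg[OF assms] KC(2)], of "KD\<^sup>2"]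
      by (simp add: power_mult_distrib mult.commute)
    finally show ?thesis by (simp add: mult_ac)
  qed
  then have "1 / (KD\<^sup>2 * KC) * (norm x)\<^sup>2 \<le> Re (cinner (C x) x)" for x
    using KC(1) KD(1) by (simp add: field_simps)
  then show ?thesis
    unfolding strictly_positive_def using C GLplus_selfadjoint[OF assms] KC(1) KD(1)
    by (intro conjI exI[of _ "1 / (KD\<^sup>2 * KC)"]) simp_all
qed

section \<open>Unconditional sums and the g-frame operator\<close>

lemma summable_on_imp_tails_small:
  fixes v :: "'i \<Rightarrow> 'a::real_normed_vector"
  assumes "v summable_on A" and "0 < e"
  obtains F0 where "finite F0" "F0 \<subseteq> A" "\<And>G. finite G \<Longrightarrow> G \<subseteq> A - F0 \<Longrightarrow> norm (sum v G) < e"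
proof -
  from assms(1) have "(sum v \<longlongrightarrow> infsum v A) (finite_subsets_at_top A)"
    by (simp add: has_sum_def[symmetric] has_sum_infsum)
  then have "eventually (\<lambda>F. dist (sum v F) (infsum v A) < e / 2) (finite_subsets_at_top A)"
    by (rule tendstoD) (use assms(2) in simp)
  then obtain F0 where F0: "finite F0" "F0 \<subseteq> A"
    and close: "\<forall>F. finite F \<and> F0 \<subseteq> F \<and> F \<subseteq> A \<longrightarrow> dist (sum v F) (infsum v A) < e / 2"
    unfolding eventually_finite_subsets_at_top by blast
  have "norm (sum v G) < e" if G: "finite G" "G \<subseteq> A - F0" for G
  proof -
    have "sum v G = sum v (F0 \<union> G) - sum v F0"
      using G F0(1) by (subst sum.union_disjoint) auto
    also have "norm \<dots> \<le> dist (sum v (F0 \<union> G)) (infsum v A) + dist (sum v F0) (infsum v A)"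
      using dist_triangle2[of "sum v (F0 \<union> G)" "sum v F0" "infsum v A"] by (simp add: dist_norm)
    also have "\<dots> < e / 2 + e / 2"
    proof (rule add_strict_mono)
      show "dist (sum v (F0 \<union> G)) (infsum v A) < e / 2" by (rule close[rule_format]) (use G F0 in auto)
      show "dist (sum v F0) (infsum v A) < e / 2" by (rule close[rule_format]) (use F0 in auto)
    qed
    finally show ?thesis by simp
  qed
  then show ?thesis using that F0 by blast
qed

lemma summable_on_if_tails_small:
  fixes v :: "'i \<Rightarrow> 'a::{real_normed_vector,complete_space}"
  assumes small: "\<And>e. 0 < e \<Longrightarrow> \<exists>F0. finite F0 \<and> F0 \<subseteq> A \<and>
      (\<forall>G. finite G \<and> G \<subseteq> A - F0 \<longrightarrow> norm (sum v G) < e)"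
  shows "v summable_on A"
proof -
  have "\<exists>P. eventually P (finite_subsets_at_top A) \<and> (\<forall>F F'. P F \<and> P F' \<longrightarrow> dist (sum v F) (sum v F') < e)"
    if "0 < e" for e
  proof -
    obtain F0 where F0: "finite F0" "F0 \<subseteq> A"
      and tail: "\<And>G. finite G \<Longrightarrow> G \<subseteq> A - F0 \<Longrightarrow> norm (sum v G) < e / 2"
      using small[of "e / 2"] \<open>0 < e\<close> by auto
    define P where "P F \<longleftrightarrow> finite F \<and> F0 \<subseteq> F \<and> F \<subseteq> A" for F
    have "eventually P (finite_subsets_at_top A)"
      unfolding eventually_finite_subsets_at_top P_def using F0 by (intro exI[of _ F0]) auto
    moreover have "dist (sum v F) (sum v F') < e" if "P F" "P F'" for F F'
    proof -
      have split: "sum v H = sum v F0 + sum v (H - F0)" if "P H" for H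
        using that by (simp add: P_def sum.subset_diff[of F0 H] add.commute)
      have "dist (sum v F) (sum v F') \<le> norm (sum v (F - F0)) + norm (sum v (F' - F0))"
        unfolding dist_norm split[OF \<open>P F\<close>] split[OF \<open>P F'\<close>]
        by (simp add: norm_triangle_ineq4)
      also have "\<dots> < e / 2 + e / 2" using that by (intro add_strict_mono tail) (auto simp: P_def)
      finally show ?thesis by simp
    qed
    ultimately show ?thesis by blast
  qed
  then have "cauchy_filter (filtermap (sum v) (finite_subsets_at_top A))"
    by (simp add: cauchy_filter_metric_filtermap)
  moreover have "complete (UNIV :: 'a set)"
    by (meson Cauchy_convergent UNIV_I complete_def convergent_def)
  ultimately obtain L where "(sum v \<longlongrightarrow> L) (finite_subsets_at_top A)"
    using complete_uniform[where S = UNIV] by (force simp add: filterlim_def)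
  then show ?thesis using summable_on_def has_sum_def by blast
qed

lemma g_Bessel_bound:
  assumes "g_Bessel I \<Lambda>"
  obtains B where "0 \<le> B" "\<And>f. (\<lambda>i. (norm (\<Lambda> i f))\<^sup>2) summable_on I"
    "\<And>f. (\<Sum>\<^sub>\<infinity>i\<in>I. (norm (\<Lambda> i f))\<^sup>2) \<le> B * (norm f)\<^sup>2"
proof -
  from assms obtain B where B: "\<And>f. (\<lambda>i. (norm (\<Lambda> i f))\<^sup>2) summable_on I"
    "\<And>f. (\<Sum>\<^sub>\<infinity>i\<in>I. (norm (\<Lambda> i f))\<^sup>2) \<le> B * (norm f)\<^sup>2"
    unfolding g_Bessel_def by blast
  have "B * (norm f)\<^sup>2 \<le> max B 0 * (norm f)\<^sup>2" for f by (simp add: mult_right_mono)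
  with B show ?thesis using that[of "max B 0"] by (meson max.cobounded2 order_trans)
qed

lemma norm_sum_cadjoint_power2_le:
  fixes \<Lambda> :: "'i \<Rightarrow> 'a::{complex_inner,complete_space} \<Rightarrow> 'b::complex_inner"
  assumes bounded: "\<forall>i\<in>I. bounded_clinear (\<Lambda> i)"
    and summable: "\<And>f. (\<lambda>i. (norm (\<Lambda> i f))\<^sup>2) summable_on I"
    and bessel: "\<And>f. (\<Sum>\<^sub>\<infinity>i\<in>I. (norm (\<Lambda> i f))\<^sup>2) \<le> B * (norm f)\<^sup>2" and "0 \<le> B"
    and G: "finite G" "G \<subseteq> I"
  shows "(norm (\<Sum>i\<in>G. cadjoint (\<Lambda> i) (\<Lambda> i f)))\<^sup>2 \<le> B * (\<Sum>i\<in>G. (norm (\<Lambda> i f))\<^sup>2)"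
proof -
  define y where "y = (\<Sum>i\<in>G. cadjoint (\<Lambda> i) (\<Lambda> i f))"
  define a b where "a i = norm (\<Lambda> i f)" and "b i = norm (\<Lambda> i y)" for i
  have "cinner y y = (\<Sum>i\<in>G. cinner (\<Lambda> i f) (\<Lambda> i y))"
    unfolding y_def bounded_bilinear.sum_left[OF bounded_bilinear_cinner]
    using G bounded by (intro sum.cong) (auto simp: cinner_cadjoint_left)
  then have "(norm y)\<^sup>2 = (\<Sum>i\<in>G. Re (cinner (\<Lambda> i f) (\<Lambda> i y)))"
    by (simp add: power2_norm_eq_cinner Re_sum)
  also have "\<dots> \<le> (\<Sum>i\<in>G. a i * b i)"
    unfolding a_def b_def by (intro sum_mono order_trans[OF complex_Re_le_cmod cmod_cinner_le])
  finally have "((norm y)\<^sup>2)\<^sup>2 \<le> (\<Sum>i\<in>G. a i * b i)\<^sup>2" by (intro power_mono) simp_all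
  also have "\<dots> \<le> (\<Sum>i\<in>G. (a i)\<^sup>2) * (\<Sum>i\<in>G. (b i)\<^sup>2)" by (rule Cauchy_Schwarz_ineq_sum)
  also have "\<dots> \<le> (\<Sum>i\<in>G. (a i)\<^sup>2) * (B * (norm y)\<^sup>2)"
  proof (rule mult_left_mono)
    have "(\<Sum>i\<in>G. (b i)\<^sup>2) \<le> (\<Sum>\<^sub>\<infinity>i\<in>I. (norm (\<Lambda> i y))\<^sup>2)"
      unfolding b_def by (rule finite_sum_le_infsum[OF summable G]) simp
    then show "(\<Sum>i\<in>G. (b i)\<^sup>2) \<le> B * (norm y)\<^sup>2" using bessel[of y] by linarith
  qed (simp add: sum_nonneg)
  finally have sq: "(norm y)\<^sup>2 * (norm y)\<^sup>2 \<le> (B * (\<Sum>i\<in>G. (a i)\<^sup>2)) * (norm y)\<^sup>2"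
    by (simp add: power2_eq_square mult_ac)
  have "(norm y)\<^sup>2 \<le> B * (\<Sum>i\<in>G. (a i)\<^sup>2)"
  proof (cases "y = 0")
    case True
    then show ?thesis using \<open>0 \<le> B\<close> by (simp add: sum_nonneg)
  next
    case False
    then show ?thesis using mult_right_le_imp_le[OF sq] by simp
  qed
  then show ?thesis by (simp add: y_def a_def)
qed

lemma g_frame_op_has_sum:
  fixes \<Lambda> :: "int \<Rightarrow> 'a::{complex_inner,complete_space} \<Rightarrow> 'b::complex_inner"
  assumes "g_Bessel I \<Lambda>"
  shows "((\<lambda>i. cinner (\<Lambda> i f) (\<Lambda> i g)) has_sum cinner (g_frame_op I \<Lambda> f) g) I"
proof -
  have bounded: "\<forall>i\<in>I. bounded_clinear (\<Lambda> i)" using assms unfolding g_Bessel_def by blast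
  obtain B where B: "0 \<le> B" "\<And>f. (\<lambda>i. (norm (\<Lambda> i f))\<^sup>2) summable_on I"
    "\<And>f. (\<Sum>\<^sub>\<infinity>i\<in>I. (norm (\<Lambda> i f))\<^sup>2) \<le> B * (norm f)\<^sup>2"
    using g_Bessel_bound[OF assms] by blast
  define v where "v i = cadjoint (\<Lambda> i) (\<Lambda> i f)" for i
  have "v summable_on I"
  proof (rule summable_on_if_tails_small)
    fix e :: real assume "0 < e"
    then have "0 < e\<^sup>2 / (B + 1)" using B(1) by simp
    then obtain F0 where F0: "finite F0" "F0 \<subseteq> I"
      and tail: "\<And>G. finite G \<Longrightarrow> G \<subseteq> I - F0 \<Longrightarrow> norm (\<Sum>i\<in>G. (norm (\<Lambda> i f))\<^sup>2) < e\<^sup>2 / (B + 1)"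
      using summable_on_imp_tails_small[OF B(2)] by metis
    have "norm (sum v G) < e" if G: "finite G" "G \<subseteq> I - F0" for G
    proof -
      have "(norm (sum v G))\<^sup>2 \<le> B * (\<Sum>i\<in>G. (norm (\<Lambda> i f))\<^sup>2)"
        unfolding v_def using G by (intro norm_sum_cadjoint_power2_le[OF bounded B(2,3,1)]) auto
      also have "\<dots> \<le> B * (e\<^sup>2 / (B + 1))"
        using tail[OF G] B(1) by (intro mult_left_mono) auto
      also have "\<dots> < e\<^sup>2" using B(1) \<open>0 < e\<close> by (simp add: field_simps)
      finally show ?thesis using \<open>0 < e\<close> by (simp add: power2_less_imp_less)
    qed
    then show "\<exists>F0. finite F0 \<and> F0 \<subseteq> I \<and> (\<forall>G. finite G \<and> G \<subseteq> I - F0 \<longrightarrow> norm (sum v G) < e)"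
      using F0 by blast
  qed
  then have "(v has_sum g_frame_op I \<Lambda> f) I"
    unfolding g_frame_op_def v_def[symmetric] by (rule has_sum_infsum)
  then have "((\<lambda>i. cinner (v i) g) has_sum cinner (g_frame_op I \<Lambda> f) g) I"
    by (rule has_sum_bounded_linear[OF bounded_bilinear.bounded_linear_left[OF bounded_bilinear_cinner]])
  then show ?thesis
    by (rule has_sum_cong[THEN iffD1, rotated]) (use bounded in \<open>simp add: v_def cinner_cadjoint_left\<close>)
qed

lemma g_frame_op_eqI:
  fixes \<Lambda> :: "int \<Rightarrow> 'a::{complex_inner,complete_space} \<Rightarrow> 'b::complex_inner"
  assumes "g_Bessel I \<Lambda>" and "\<And>g. ((\<lambda>i. cinner (\<Lambda> i f) (\<Lambda> i g)) has_sum cinner h g) I"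
  shows "g_frame_op I \<Lambda> f = h"
  using has_sum_unique[OF g_frame_op_has_sum[OF assms(1)] assms(2)] by (rule cinner_ext_left)

lemma g_frame_op_add:
  fixes \<Lambda> :: "int \<Rightarrow> 'a::{complex_inner,complete_space} \<Rightarrow> 'b::complex_inner"
  assumes "g_Bessel I \<Lambda>"
  shows "g_frame_op I \<Lambda> (x + y) = g_frame_op I \<Lambda> x + g_frame_op I \<Lambda> y"
proof (rule g_frame_op_eqI[OF assms])
  fix g
  have "((\<lambda>i. cinner (\<Lambda> i x) (\<Lambda> i g) + cinner (\<Lambda> i y) (\<Lambda> i g)) has_sum
      cinner (g_frame_op I \<Lambda> x + g_frame_op I \<Lambda> y) g) I"
    unfolding cinner_add_left by (intro has_sum_add g_frame_op_has_sum[OF assms])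
  moreover have "cinner (\<Lambda> i (x + y)) (\<Lambda> i g) = cinner (\<Lambda> i x) (\<Lambda> i g) + cinner (\<Lambda> i y) (\<Lambda> i g)"
    if "i \<in> I" for i
    using assms that by (simp add: g_Bessel_def bounded_clinear_add cinner_add_left)
  ultimately show "((\<lambda>i. cinner (\<Lambda> i (x + y)) (\<Lambda> i g)) has_sum
      cinner (g_frame_op I \<Lambda> x + g_frame_op I \<Lambda> y) g) I"
    by (subst has_sum_cong) simp_all
qed

lemma g_frame_op_scaleC:
  fixes \<Lambda> :: "int \<Rightarrow> 'a::{complex_inner,complete_space} \<Rightarrow> 'b::complex_inner"
  assumes "g_Bessel I \<Lambda>"
  shows "g_frame_op I \<Lambda> (c *\<^sub>C x) = c *\<^sub>C g_frame_op I \<Lambda> x"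
proof (rule g_frame_op_eqI[OF assms])
  fix g
  have "((\<lambda>i. c * cinner (\<Lambda> i x) (\<Lambda> i g)) has_sum cinner (c *\<^sub>C g_frame_op I \<Lambda> x) g) I"
    unfolding cinner_scaleC_left by (intro has_sum_cmult_right g_frame_op_has_sum[OF assms])
  moreover have "cinner (\<Lambda> i (c *\<^sub>C x)) (\<Lambda> i g) = c * cinner (\<Lambda> i x) (\<Lambda> i g)" if "i \<in> I" for i
    using assms that by (simp add: g_Bessel_def bounded_clinear_scaleC cinner_scaleC_left)
  ultimately show "((\<lambda>i. cinner (\<Lambda> i (c *\<^sub>C x)) (\<Lambda> i g)) has_sum cinner (c *\<^sub>C g_frame_op I \<Lambda> x) g) I"
    by (subst has_sum_cong) simp_all
qed

lemma selfadjoint_g_frame_op: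
  fixes \<Lambda> :: "int \<Rightarrow> 'a::{complex_inner,complete_space} \<Rightarrow> 'b::complex_inner"
  assumes "g_Bessel I \<Lambda>"
  shows "selfadjoint (g_frame_op I \<Lambda>)"
  unfolding selfadjoint_def
proof (intro allI)
  fix x y
  have "((\<lambda>i. cnj (cinner (\<Lambda> i y) (\<Lambda> i x))) has_sum cnj (cinner (g_frame_op I \<Lambda> y) x)) I"
    using g_frame_op_has_sum[OF assms] by simp
  then have "((\<lambda>i. cinner (\<Lambda> i x) (\<Lambda> i y)) has_sum cinner x (g_frame_op I \<Lambda> y)) I"
    by (simp only: cinner_commute[symmetric])
  then show "cinner (g_frame_op I \<Lambda> x) y = cinner x (g_frame_op I \<Lambda> y)"
    using g_frame_op_has_sum[OF assms] has_sum_unique by blast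
qed

lemma Re_cinner_g_frame_op:
  fixes \<Lambda> :: "int \<Rightarrow> 'a::{complex_inner,complete_space} \<Rightarrow> 'b::complex_inner"
  assumes "g_Bessel I \<Lambda>"
  shows "Re (cinner (g_frame_op I \<Lambda> f) f) = (\<Sum>\<^sub>\<infinity>i\<in>I. (norm (\<Lambda> i f))\<^sup>2)"
  using has_sum_Re[OF g_frame_op_has_sum[OF assms, of f f]]
  by (simp add: power2_norm_eq_cinner infsumI)

lemma bounded_clinear_g_frame_op:
  fixes \<Lambda> :: "int \<Rightarrow> 'a::{complex_inner,complete_space} \<Rightarrow> 'b::complex_inner"
  assumes "g_Bessel I \<Lambda>"
  shows "bounded_clinear (g_frame_op I \<Lambda>)"
proof -
  obtain B where B: "\<And>f. (\<Sum>\<^sub>\<infinity>i\<in>I. (norm (\<Lambda> i f))\<^sup>2) \<le> B * (norm f)\<^sup>2"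
    using g_Bessel_bound[OF assms] by blast
  have "linear (g_frame_op I \<Lambda>)"
    by (rule linearI) (simp_all add: g_frame_op_add[OF assms] scaleR_scaleC g_frame_op_scaleC[OF assms])
  then have "norm (g_frame_op I \<Lambda> f) \<le> B * norm f" for f
  proof (rule norm_le_if_quadratic_form_le[OF _ selfadjoint_g_frame_op[OF assms]])
    show "0 \<le> Re (cinner (g_frame_op I \<Lambda> y) y)" for y
      by (simp add: Re_cinner_g_frame_op[OF assms] infsum_nonneg)
    show "Re (cinner (g_frame_op I \<Lambda> y) y) \<le> B * (norm y)\<^sup>2" for y
      using B[of y] by (simp add: Re_cinner_g_frame_op[OF assms])
  qed
  then show ?thesis
    unfolding bounded_clinear_def
    by (intro conjI allI exI[of _ B] g_frame_op_add[OF assms] g_frame_op_scaleC[OF assms])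
      (simp add: mult.commute)
qed

lemma g_frame_imp_g_Bessel: "g_frame I \<Lambda> \<Longrightarrow> g_Bessel I \<Lambda>"
  unfolding g_frame_def g_Bessel_def by blast

lemma strictly_positive_g_frame_op:
  fixes \<Lambda> :: "int \<Rightarrow> 'a::{complex_inner,complete_space} \<Rightarrow> 'b::complex_inner"
  assumes "g_frame I \<Lambda>"
  shows "strictly_positive (g_frame_op I \<Lambda>)"
proof -
  have bessel: "g_Bessel I \<Lambda>" by (rule g_frame_imp_g_Bessel[OF assms])
  obtain A where "0 < A" "\<And>f. A * (norm f)\<^sup>2 \<le> Re (cinner (g_frame_op I \<Lambda> f) f)"
    using assms unfolding g_frame_def Re_cinner_g_frame_op[OF bessel] by blast
  then show ?thesis
    unfolding strictly_positive_def
    using bounded_clinear_g_frame_op[OF bessel] selfadjoint_g_frame_op[OF bessel] by blast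
qed

lemma controlled_g_frameI:
  assumes bessel: "g_Bessel I \<Lambda>"
    and sum: "\<And>f. ((\<lambda>i. cinner (\<Lambda> i (C f)) (\<Lambda> i (C' f))) has_sum cinner (R f) f) I"
    and R: "strictly_positive R"
  shows "controlled_g_frame I \<Lambda> C C'"
proof -
  obtain A where R': "bounded_clinear R" "selfadjoint R"
    and lower: "0 < A" "\<And>f. A * (norm f)\<^sup>2 \<le> Re (cinner (R f) f)"
    using R unfolding strictly_positive_def by blast
  obtain B where B: "\<And>f. Re (cinner (R f) f) \<le> B * (norm f)\<^sup>2"
    using bounded_clinear_quadratic_bound[OF R'(1)] by blast
  show ?thesis
    unfolding controlled_g_frame_def
  proof (rule conjI[OF bessel], rule exI[of _ A], rule exI[of _ B], intro conjI allI lower(1))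
    fix f
    have infsum_eq: "(\<Sum>\<^sub>\<infinity>i\<in>I. cinner (\<Lambda> i (C f)) (\<Lambda> i (C' f))) = cinner (R f) f"
      by (rule infsumI[OF sum])
    show "(\<lambda>i. cinner (\<Lambda> i (C f)) (\<Lambda> i (C' f))) summable_on I"
      by (rule has_sum_imp_summable[OF sum])
    show "Im (\<Sum>\<^sub>\<infinity>i\<in>I. cinner (\<Lambda> i (C f)) (\<Lambda> i (C' f))) = 0"
      unfolding infsum_eq by (rule Im_cinner_selfadjoint[OF R'(2)])
    show "A * (norm f)\<^sup>2 \<le> Re (\<Sum>\<^sub>\<infinity>i\<in>I. cinner (\<Lambda> i (C f)) (\<Lambda> i (C' f)))"
      unfolding infsum_eq by (rule lower(2))
    show "Re (\<Sum>\<^sub>\<infinity>i\<in>I. cinner (\<Lambda> i (C f)) (\<Lambda> i (C' f))) \<le> B * (norm f)\<^sup>2"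
      unfolding infsum_eq by (rule B)
  qed
qed

theorem mainTheorem2:
  fixes I :: "int set"
    and \<Lambda> :: "int \<Rightarrow> 'a::{complex_inner,complete_space} \<Rightarrow> 'b::{complex_inner,complete_space}"
    and C C' :: "'a \<Rightarrow> 'a"
  assumes "g_frame I \<Lambda>"
    and "GLplus C" and "GLplus C'"
    and "\<forall>f. C (C' f) = C' (C f)"
    and "\<forall>f. C (g_frame_op I \<Lambda> f) = g_frame_op I \<Lambda> (C f)"
    and "\<forall>f. C' (g_frame_op I \<Lambda> f) = g_frame_op I \<Lambda> (C' f)"
  shows "controlled_g_frame I \<Lambda> C C'"
proof -
  define S where "S = g_frame_op I \<Lambda>"
  have CC': "\<And>f. C (C' f) = C' (C f)" and CS: "\<And>f. C (S f) = S (C f)" and C'S: "\<And>f. C' (S f) = S (C' f)"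
    using assms(4-6) by (simp_all add: S_def)
  have T: "strictly_positive (\<lambda>x. C (C' x))"
    by (rule strictly_positive_compose[OF GLplus_strictly_positive[OF assms(2)]
          GLplus_strictly_positive[OF assms(3)] CC'])
  have R: "strictly_positive (\<lambda>x. S (C (C' x)))"
    by (rule strictly_positive_compose[OF strictly_positive_g_frame_op[OF assms(1), folded S_def] T])
      (simp add: CS C'S)
  show ?thesis
  proof (rule controlled_g_frameI[OF g_frame_imp_g_Bessel[OF assms(1)] _ R])
    fix f
    have "cinner (S (C f)) (C' f) = cinner (S (C (C' f))) f"
      by (simp add: selfadjointD[OF GLplus_selfadjoint[OF assms(3)], symmetric] C'S CC')
    then show "((\<lambda>i. cinner (\<Lambda> i (C f)) (\<Lambda> i (C' f))) has_sum cinner (S (C (C' f))) f) I"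
      using g_frame_op_has_sum[OF g_frame_imp_g_Bessel[OF assms(1)], of "C f" "C' f"] by (simp add: S_def)
  qed
qed

end
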